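(* Let $k\ge 0$ be an integer. A finite nonempty subset $\sigma\subseteq\mathbb{Z}^2$ is a simplex of $\mathrm{VR}(\mathbb{Z}^2;k)$ if and only if $\bigcap_{v\in\sigma}B_{\mathbb{R}^2}(v,\tfrac{k+1}{2})\neq\emptyset$.
   Context: $\mathbb{Z}^2$ and $\mathbb{R}^2$ carry the $l^1$ metric $d((x,y),(x',y'))=|x-x'|+|y-y'|$, and $B_{\mathbb{R}^2}(v,r)=\{p\in\mathbb{R}^2: d(p,v)< r\}$ is the open $l^1$ ball. $\mathrm{VR}(X;r)$ is the simplicial complex on vertex set $X$ whose simplices are the finite nonempty subsets of diameter at most $r$. *)

theory Defs
  imports "HOL-Analysis.Analysis"
begin

definition l1_dist_Z :: "int \<times> int \<Rightarrow> int \<times> int \<Rightarrow> int" where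
  "l1_dist_Z p q = \<bar>fst p - fst q\<bar> + \<bar>snd p - snd q\<bar>"

definition l1_dist_R :: "real \<times> real \<Rightarrow> real \<times> real \<Rightarrow> real" where
  "l1_dist_R p q = \<bar>fst p - fst q\<bar> + \<bar>snd p - snd q\<bar>"

definition real_pt :: "int \<times> int \<Rightarrow> real \<times> real" where
  "real_pt v = (real_of_int (fst v), real_of_int (snd v))"

definition l1_ball_R :: "real \<times> real \<Rightarrow> real \<Rightarrow> (real \<times> real) set" where
  "l1_ball_R v r = {p. l1_dist_R p v < r}"

definition VR_simplex_Z2 :: "(int \<times> int) set \<Rightarrow> real \<Rightarrow> (int \<times> int) set \<Rightarrow> bool" where
  "VR_simplex_Z2 X r \<sigma> \<longleftrightarrow> finite \<sigma> \<and> \<sigma> \<noteq> {} \<and> \<sigma> \<subseteq> X \<and>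
     (\<forall>u\<in>\<sigma>. \<forall>w\<in>\<sigma>. real_of_int (l1_dist_Z u w) \<le> r)"

end

theory Submission
  imports Defs
begin

text \<open>In the rotated coordinates \<open>x + y\<close>, \<open>x - y\<close> the l1 metric of the plane becomes the
  l\<infinity> metric, so l1 balls are squares with sides parallel to the new axes. A family of such
  squares meets as soon as its projections to both new axes do, and a finite family of open
  intervals of common radius \<open>r\<close> meets iff its centres have spread less than \<open>2 r\<close>: the midrange
  is a common point. Hence finitely many open l1 balls of radius \<open>r\<close> meet iff their centres
  are pairwise at distance less than \<open>2 r\<close>. For integer centres and \<open>2 r = k + 1\<close> that is
  distance at most \<open>k\<close>.\<close>

lemma abs_add_abs_eq_max_abs:
  fixes a b :: "'a::linordered_idom"
  shows "\<bar>a\<bar> + \<bar>b\<bar> = max \<bar>a + b\<bar> \<bar>a - b\<bar>"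
  by (simp add: abs_if max_def)

lemma l1_dist_R_eq_max_rotated:
  "l1_dist_R p q =
     max \<bar>(fst p + snd p) - (fst q + snd q)\<bar> \<bar>(fst p - snd p) - (fst q - snd q)\<bar>"
  unfolding l1_dist_R_def abs_add_abs_eq_max_abs by (simp add: algebra_simps)

lemma l1_dist_R_commute: "l1_dist_R p q = l1_dist_R q p"
  unfolding l1_dist_R_def by (simp add: abs_minus_commute)

lemma l1_dist_R_triangle: "l1_dist_R p q \<le> l1_dist_R p z + l1_dist_R z q"
  unfolding l1_dist_R_def by linarith

lemma l1_dist_R_real_pt: "l1_dist_R (real_pt u) (real_pt w) = real_of_int (l1_dist_Z u w)"
  unfolding l1_dist_R_def l1_dist_Z_def real_pt_def by simp

lemma abs_diff_midrange_less:
  fixes A :: "real set"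
  assumes "finite A" and "a \<in> A" and "Max A - Min A < 2 * r"
  shows "\<bar>a - (Max A + Min A) / 2\<bar> < r"
  using Max_ge[OF assms(1,2)] Min_le[OF assms(1,2)] assms(3)
  unfolding abs_less_iff by (auto simp: field_simps)

lemma Max_image_minus_Min_image_less:
  fixes f :: "'a \<Rightarrow> real"
  assumes "finite P" and "P \<noteq> {}"
    and lipschitz: "\<And>p q. \<bar>f p - f q\<bar> \<le> d p q"
    and close: "\<And>p q. p \<in> P \<Longrightarrow> q \<in> P \<Longrightarrow> d p q < c"
  shows "Max (f ` P) - Min (f ` P) < c"
proof -
  have "Max (f ` P) \<in> f ` P" "Min (f ` P) \<in> f ` P"
    using assms(1,2) by simp_all
  then obtain p q where "p \<in> P" "q \<in> P" "Max (f ` P) = f p" "Min (f ` P) = f q"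
    by blast
  then show ?thesis
    using lipschitz[of p q] close[of p q] abs_ge_self[of "f p - f q"] by linarith
qed

lemma l1_balls_Inter_nonempty_iff:
  fixes P :: "(real \<times> real) set"
  assumes "finite P"
  shows "(\<Inter>p\<in>P. l1_ball_R p r) \<noteq> {} \<longleftrightarrow> (\<forall>p\<in>P. \<forall>q\<in>P. l1_dist_R p q < 2 * r)"
proof
  assume "(\<Inter>p\<in>P. l1_ball_R p r) \<noteq> {}"
  then obtain z where z: "\<And>p. p \<in> P \<Longrightarrow> l1_dist_R z p < r"
    unfolding l1_ball_R_def by blast
  show "\<forall>p\<in>P. \<forall>q\<in>P. l1_dist_R p q < 2 * r"
  proof (intro ballI)
    fix p q assume "p \<in> P" "q \<in> P"
    have "l1_dist_R p q \<le> l1_dist_R z p + l1_dist_R z q"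
      using l1_dist_R_triangle[of p q z] l1_dist_R_commute[of p z] by linarith
    then show "l1_dist_R p q < 2 * r"
      using z[OF \<open>p \<in> P\<close>] z[OF \<open>q \<in> P\<close>] by linarith
  qed
next
  assume close: "\<forall>p\<in>P. \<forall>q\<in>P. l1_dist_R p q < 2 * r"
  show "(\<Inter>p\<in>P. l1_ball_R p r) \<noteq> {}"
  proof (cases "P = {}")
    case False
    define S where "S = (\<lambda>p. fst p + snd p) ` P"
    define T where "T = (\<lambda>p. fst p - snd p) ` P"
    define z where "z = ((Max S + Min S + Max T + Min T) / 4, (Max S + Min S - Max T - Min T) / 4)"
    have spread_S: "Max S - Min S < 2 * r"
      unfolding S_def using \<open>finite P\<close> False close
      by (intro Max_image_minus_Min_image_less[where d = l1_dist_R])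
         (simp_all add: l1_dist_R_eq_max_rotated)
    have spread_T: "Max T - Min T < 2 * r"
      unfolding T_def using \<open>finite P\<close> False close
      by (intro Max_image_minus_Min_image_less[where d = l1_dist_R])
         (simp_all add: l1_dist_R_eq_max_rotated)
    have z_rotated: "fst z + snd z = (Max S + Min S) / 2" "fst z - snd z = (Max T + Min T) / 2"
      unfolding z_def by (simp_all add: field_simps)
    have "l1_dist_R z p < r" if "p \<in> P" for p
    proof -
      have "finite S" "finite T"
        using \<open>finite P\<close> unfolding S_def T_def by simp_all
      moreover have "fst p + snd p \<in> S" "fst p - snd p \<in> T"
        using that unfolding S_def T_def by simp_all
      ultimately have "\<bar>(fst p + snd p) - (fst z + snd z)\<bar> < r"
        and "\<bar>(fst p - snd p) - (fst z - snd z)\<bar> < r"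
        unfolding z_rotated using spread_S spread_T by (simp_all add: abs_diff_midrange_less)
      then show ?thesis
        unfolding l1_dist_R_eq_max_rotated by (simp add: abs_minus_commute)
    qed
    then show ?thesis unfolding l1_ball_R_def by blast
  qed simp
qed

theorem corollary4p3:
  fixes k :: nat and \<sigma> :: "(int \<times> int) set"
  assumes "finite \<sigma>" and "\<sigma> \<noteq> {}"
  shows "VR_simplex_Z2 UNIV (real k) \<sigma> \<longleftrightarrow>
         (\<Inter>v\<in>\<sigma>. l1_ball_R (real_pt v) ((real k + 1) / 2)) \<noteq> {}"
proof -
  have diameter_iff: "real_of_int (l1_dist_Z u w) \<le> real k \<longleftrightarrow>
                  l1_dist_R (real_pt u) (real_pt w) < 2 * ((real k + 1) / 2)" for u w
  proof -
    have "real_of_int (l1_dist_Z u w) \<le> real k \<longleftrightarrow> l1_dist_Z u w < int k + 1"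
      by linarith
    also have "\<dots> \<longleftrightarrow> real_of_int (l1_dist_Z u w) < real k + 1"
      by linarith
    also have "real k + 1 = 2 * ((real k + 1) / 2)"
      by simp
    finally show ?thesis
      unfolding l1_dist_R_real_pt .
  qed
  have "VR_simplex_Z2 UNIV (real k) \<sigma> \<longleftrightarrow>
        (\<forall>p\<in>real_pt ` \<sigma>. \<forall>q\<in>real_pt ` \<sigma>. l1_dist_R p q < 2 * ((real k + 1) / 2))"
    using assms unfolding VR_simplex_Z2_def diameter_iff by simp
  also have "\<dots> \<longleftrightarrow> (\<Inter>p\<in>real_pt ` \<sigma>. l1_ball_R p ((real k + 1) / 2)) \<noteq> {}"
    using l1_balls_Inter_nonempty_iff[of "real_pt ` \<sigma>"] assms(1) by simp
  finally show ?thesis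
    by simp
qed

end
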